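(* Let $a>b>0$ be real numbers with $a/b$ irrational, and let $A,B,C$ be positive integers such that one of the following holds: (i) $A a^2+C b^2=B\,a\,b$ (equation in defect); (ii) $A a^2+B\,a\,b=C b^2$; (iii) $A a^2=C b^2$. Let $e_{-1}=a,\ e_0=b,\ e_1,e_2,\dots$ be the anthyphairetic remainders of $a$ to $b$. Then there exist an index $n\ge 0$ and positive integers $A',B',C'$ such that $A' e_n^2=B'\,e_n\,e_{n+1}+C' e_{n+1}^2$, i.e. after finitely many anthyphairetic substitutions the equation becomes a quadratic equation in excess.
   Context: For positive reals $a,b$, the anthyphairesis of $a$ to $b$ is the Euclidean subtraction algorithm: set $e_{-1}=a$, $e_0=b$, and for $i\ge 0$, as long as $e_i>0$, write $e_{i-1}=k_i e_i+e_{i+1}$ with $k_i$ a nonnegative integer and $0\le e_{i+1}<e_i$; the process stops if some remainder is $0$ (which never happens when $a/b$ is irrational). The $e_i$ are the anthyphairetic remainders. An anthyphairetic substitution replaces $e_{i-1}$ by $k_ie_i+e_{i+1}$ in a quadratic relation between $e_{i-1}$ and $e_i$, producing a quadratic relation between $e_i$ and $e_{i+1}$. *)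

theory Defs
  imports Complex_Main
begin

text \<open>Anthyphairetic remainders of a to b, shifted by one:
  anth_rem a b 0 = e_{-1} = a, anth_rem a b 1 = e_0 = b, and in general
  anth_rem a b (i+1) = e_i.\<close>
fun anth_rem :: "real \<Rightarrow> real \<Rightarrow> nat \<Rightarrow> real" where
  "anth_rem a b 0 = a"
| "anth_rem a b (Suc 0) = b"
| "anth_rem a b (Suc (Suc n)) =
     anth_rem a b n - of_int \<lfloor>anth_rem a b n / anth_rem a b (Suc n)\<rfloor> * anth_rem a b (Suc n)"

end

theory Submission imports Defs begin

text \<open>Write the relation as p x^2 + q x y + r y^2 = 0 for consecutive remainders x, y.  The
  substitution x = k y + z turns (p, q, r) into (p k^2 + q k + r, 2 p k + q, p).  The relation is
  in excess when p and q, r have opposite signs.  Types (ii) and (iii) (p < 0, q \<le> 0, r > 0)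
  reach excess after one substitution, because x > k y forces p k^2 + q k + r > 0.  For the
  defect type (p > 0, r > 0, which forces q < 0) one substitution either leads to (ii), (iii) or excess, or
  yields a defect relation again with a strictly smaller sum p + r of outer coefficients, so it
  cannot repeat forever.  A new leading coefficient 0 is excluded by irrationality.\<close>

lemma floor_remainder_irrational:
  fixes x y :: real
  assumes "0 < y" and "x / y \<notin> \<rat>"
  defines "z \<equiv> x - of_int \<lfloor>x / y\<rfloor> * y"
  shows "0 < z" and "z < y" and "y / z \<notin> \<rat>"
proof -
  have z_frac: "z = y * frac (x / y)"
    using assms(1) by (simp add: z_def frac_def algebra_simps)
  have "frac (x / y) \<noteq> 0"
    using assms(2) Ints_subset_Rats by (auto simp: frac_eq_0_iff)
  then have frac_pos: "0 < frac (x / y)"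
    using frac_ge_0[of "x / y"] by linarith
  show "0 < z" using z_frac assms(1) frac_pos by simp
  show "z < y" using z_frac assms(1) frac_lt_1[of "x / y"] by simp
  show "y / z \<notin> \<rat>"
  proof
    assume "y / z \<in> \<rat>"
    then have "inverse (frac (x / y)) \<in> \<rat>"
      using z_frac assms(1) by (simp add: field_simps)
    then have "frac (x / y) \<in> \<rat>"
      using Rats_inverse by fastforce
    then have "frac (x / y) + of_int \<lfloor>x / y\<rfloor> \<in> \<rat>"
      by (intro Rats_add) auto
    then show False
      using assms(2) by (simp add: frac_def)
  qed
qed

definition anth_eq :: "real \<Rightarrow> real \<Rightarrow> nat \<Rightarrow> int \<Rightarrow> int \<Rightarrow> int \<Rightarrow> bool" where
  "anth_eq a b n p q r \<longleftrightarrow>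
     of_int p * (anth_rem a b n)\<^sup>2 + of_int q * anth_rem a b n * anth_rem a b (Suc n)
       + of_int r * (anth_rem a b (Suc n))\<^sup>2 = 0"

definition anth_excess :: "real \<Rightarrow> real \<Rightarrow> nat \<Rightarrow> bool" where
  "anth_excess a b n \<longleftrightarrow> (\<exists>A' B' C' :: nat. A' > 0 \<and> B' > 0 \<and> C' > 0 \<and>
     real A' * (anth_rem a b n)\<^sup>2
       = real B' * anth_rem a b n * anth_rem a b (Suc n) + real C' * (anth_rem a b (Suc n))\<^sup>2)"

lemma anth_eq_uminus: "anth_eq a b n (- p) (- q) (- r) \<longleftrightarrow> anth_eq a b n p q r"
  unfolding anth_eq_def by (auto simp: algebra_simps)

lemma anth_excess_if_signs:
  assumes "anth_eq a b n p q r" and "p > 0" and "q < 0" and "r < 0"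
  shows "anth_excess a b n"
  unfolding anth_excess_def
proof (intro exI conjI)
  show "nat p > 0" "nat (- q) > 0" "nat (- r) > 0" using assms by auto
  show "real (nat p) * (anth_rem a b n)\<^sup>2
      = real (nat (- q)) * anth_rem a b n * anth_rem a b (Suc n)
        + real (nat (- r)) * (anth_rem a b (Suc n))\<^sup>2"
    using assms by (simp add: anth_eq_def of_nat_nat algebra_simps)
qed

lemma anth_eq_substitute:
  assumes "anth_eq a b n p q r"
  defines "k \<equiv> \<lfloor>anth_rem a b n / anth_rem a b (Suc n)\<rfloor>"
  shows "anth_eq a b (Suc n) (p * k\<^sup>2 + q * k + r) (2 * p * k + q) p"
  using assms(1)
  unfolding anth_eq_def anth_rem.simps(3)[of a b n, folded k_def]
  by (simp add: algebra_simps power2_eq_square)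

context
  fixes a b :: real
  assumes b_pos: "b > 0" and b_less_a: "b < a" and ratio_irrational: "a / b \<notin> \<rat>"
begin

lemma anth_rem_invariant:
  "0 < anth_rem a b (Suc n) \<and> anth_rem a b (Suc n) < anth_rem a b n
   \<and> anth_rem a b n / anth_rem a b (Suc n) \<notin> \<rat>"
proof (induction n)
  case 0
  then show ?case using b_pos b_less_a ratio_irrational by simp
next
  case (Suc n)
  then show ?case
    using floor_remainder_irrational[of "anth_rem a b (Suc n)" "anth_rem a b n"] by simp
qed

lemma anth_rem_pos: "0 < anth_rem a b (Suc n)"
  using anth_rem_invariant by blast

lemma anth_rem_decreasing: "anth_rem a b (Suc n) < anth_rem a b n"
  using anth_rem_invariant by blast

lemma anth_rem_ratio_irrational: "anth_rem a b n / anth_rem a b (Suc n) \<notin> \<rat>"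
  using anth_rem_invariant by blast

lemma anth_quotient_ge_one: "\<lfloor>anth_rem a b n / anth_rem a b (Suc n)\<rfloor> \<ge> 1"
  using anth_rem_pos[of n] anth_rem_decreasing[of n] by simp

lemma anth_quotient_mult_less:
  "of_int \<lfloor>anth_rem a b n / anth_rem a b (Suc n)\<rfloor> * anth_rem a b (Suc n) < anth_rem a b n"
  using anth_rem_pos[of "Suc n"] by simp

lemma anth_eq_leading_zero:
  assumes "anth_eq a b n 0 q r"
  shows "q = 0 \<and> r = 0"
proof -
  define x y where "x = anth_rem a b n" and "y = anth_rem a b (Suc n)"
  have y_pos: "0 < y" using anth_rem_pos by (simp add: y_def)
  have "(of_int q * x + of_int r * y) * y = 0"
    using assms by (simp add: anth_eq_def x_def y_def algebra_simps power2_eq_square)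
  then have lin: "of_int q * x + of_int r * y = 0" using y_pos by simp
  have "q = 0"
  proof (rule ccontr)
    assume "q \<noteq> 0"
    then have "x / y = of_int (- r) / of_int q" using lin y_pos by (simp add: field_simps)
    then show False using anth_rem_ratio_irrational[of n] by (simp add: x_def y_def)
  qed
  then show ?thesis using lin y_pos by simp
qed

lemma anth_excess_next:
  assumes rel: "anth_eq a b n p q r" and "p < 0" and "q \<le> 0" and "r > 0"
  shows "anth_excess a b (Suc n)"
proof -
  define k x y where "k = \<lfloor>anth_rem a b n / anth_rem a b (Suc n)\<rfloor>"
    and "x = anth_rem a b n" and "y = anth_rem a b (Suc n)"
  have y_pos: "0 < y" and k_ge: "k \<ge> 1" and ky_less: "of_int k * y < x"
    using anth_rem_pos anth_quotient_ge_one anth_quotient_mult_less by (simp_all add: k_def x_def y_def)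
  have "(of_int k * y)\<^sup>2 < x\<^sup>2"
    using k_ge y_pos ky_less by (intro power_strict_mono) auto
  then have "of_int p * x\<^sup>2 < of_int p * (of_int k * y)\<^sup>2"
    using \<open>p < 0\<close> by simp
  moreover have "of_int q * x * y \<le> of_int q * (of_int k * y) * y"
    using \<open>q \<le> 0\<close> y_pos ky_less by (simp add: mult_le_cancel_right mult_le_cancel_left)
  moreover have "of_int p * x\<^sup>2 + of_int q * x * y + of_int r * y\<^sup>2 = 0"
    using rel by (simp add: anth_eq_def x_def y_def)
  ultimately have "0 < of_int (p * k\<^sup>2 + q * k + r) * y\<^sup>2"
    by (simp add: algebra_simps power_mult_distrib power2_eq_square)
  then have "0 < real_of_int (p * k\<^sup>2 + q * k + r)"
    using y_pos by (meson zero_less_mult_pos2 zero_less_power)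
  then have "p * k\<^sup>2 + q * k + r > 0"
    by (simp only: of_int_0_less_iff)
  moreover have "p * k < 0"
    using \<open>p < 0\<close> k_ge by (simp add: mult_neg_pos)
  then have "2 * p * k + q < 0"
    using \<open>q \<le> 0\<close> by simp
  ultimately show ?thesis
    using anth_excess_if_signs[OF anth_eq_substitute[OF rel, folded k_def]] \<open>p < 0\<close> by simp
qed

lemma anth_excess_eventually_opposite:
  assumes rel: "anth_eq a b n p q r" and "p < 0" and "r > 0"
  shows "\<exists>n' \<ge> n. anth_excess a b n'"
proof (cases "q > 0")
  case True
  then have "anth_excess a b n"
    using anth_excess_if_signs[of a b n "- p" "- q" "- r"] rel assms by (simp add: anth_eq_uminus)
  then show ?thesis by blast
next
  case False
  then have "anth_excess a b (Suc n)"
    using anth_excess_next[OF rel] assms by simp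
  then show ?thesis by (blast intro: le_SucI)
qed

lemma anth_eq_substitute_leading_less:
  assumes rel: "anth_eq a b n p q r" and "p > 0" and "r > 0"
  defines "k \<equiv> \<lfloor>anth_rem a b n / anth_rem a b (Suc n)\<rfloor>"
  shows "p * k\<^sup>2 + q * k + r < r"
proof -
  define x y where "x = anth_rem a b n" and "y = anth_rem a b (Suc n)"
  have y_pos: "0 < y" and x_pos: "0 < x" and k_ge: "k \<ge> 1" and ky_less: "of_int k * y < x"
    using anth_rem_pos anth_rem_decreasing anth_quotient_ge_one anth_quotient_mult_less
    by (auto simp: k_def x_def y_def intro: less_trans)
  have "x * (of_int p * x + of_int q * y) = - (of_int r * y\<^sup>2)"
    using rel by (simp add: anth_eq_def x_def y_def algebra_simps power2_eq_square)
  also have "\<dots> < 0"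
    using y_pos \<open>r > 0\<close> by simp
  finally have "of_int p * x + of_int q * y < 0"
    using x_pos by (simp add: mult_less_0_iff)
  moreover have "of_int p * (of_int k * y) < of_int p * x"
    using ky_less \<open>p > 0\<close> by simp
  ultimately have "of_int (p * k + q) * y < 0"
    by (simp add: algebra_simps)
  then have "p * k + q < 0"
    using y_pos by (simp add: mult_less_0_iff del: of_int_add of_int_mult)
  then have "k * (p * k + q) < 0"
    using k_ge by (simp add: mult_pos_neg)
  then show ?thesis
    by (simp add: algebra_simps power2_eq_square)
qed

lemma anth_excess_eventually_defect:
  assumes "anth_eq a b n p q r" and "p > 0" and "r > 0"
  shows "\<exists>n' > n. anth_excess a b n'"
  using assms
proof (induction "nat (p + r)" arbitrary: n p q r rule: less_induct)
  case less
  define k where "k = \<lfloor>anth_rem a b n / anth_rem a b (Suc n)\<rfloor>"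
  define p' where "p' = p * k\<^sup>2 + q * k + r"
  have rel': "anth_eq a b (Suc n) p' (2 * p * k + q) p"
    using anth_eq_substitute[OF less.prems(1)] by (simp add: p'_def k_def)
  consider "p' < 0" | "p' = 0" | "p' > 0" by linarith
  then show ?case
  proof cases
    case 1
    then show ?thesis
      using anth_excess_eventually_opposite[OF rel'] \<open>p > 0\<close> Suc_le_eq by blast
  next
    case 2
    then show ?thesis
      using anth_eq_leading_zero[OF rel'[unfolded 2]] \<open>p > 0\<close> by simp
  next
    case 3
    have "p' < r"
      using anth_eq_substitute_leading_less[OF less.prems(1) \<open>p > 0\<close> \<open>r > 0\<close>]
      by (simp add: p'_def k_def)
    then have "nat (p' + p) < nat (p + r)"
      using 3 \<open>p > 0\<close> by simp
    then have "\<exists>n' > Suc n. anth_excess a b n'"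
      using less.hyps[OF _ rel' 3] \<open>p > 0\<close> by blast
    then show ?thesis
      using Suc_lessD less_trans_Suc by blast
  qed
qed

end

theorem proposition6p2p3:
  fixes a b :: real and A B C :: nat
  assumes "a > b" and "b > 0"
    and "a / b \<notin> \<rat>"
    and "A > 0" and "B > 0" and "C > 0"
    and "A * a\<^sup>2 + C * b\<^sup>2 = B * a * b
         \<or> A * a\<^sup>2 + B * a * b = C * b\<^sup>2
         \<or> A * a\<^sup>2 = C * b\<^sup>2"
  shows "\<exists>n::nat. \<exists>A' B' C' :: nat. A' > 0 \<and> B' > 0 \<and> C' > 0 \<and>
           real A' * (anth_rem a b (n+1))\<^sup>2
             = real B' * anth_rem a b (n+1) * anth_rem a b (n+2)
               + real C' * (anth_rem a b (n+2))\<^sup>2"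
proof -
  have "\<exists>n > 0. anth_excess a b n"
    using assms(7)
  proof (elim disjE)
    assume "A * a\<^sup>2 + C * b\<^sup>2 = B * a * b"
    then have "anth_eq a b 0 (int A) (- int B) (int C)"
      by (simp add: anth_eq_def algebra_simps)
    then show ?thesis
      using anth_excess_eventually_defect[OF assms(2,1,3)] assms(4-6) by simp
  next
    assume "A * a\<^sup>2 + B * a * b = C * b\<^sup>2"
    then have "anth_eq a b 0 (- int A) (- int B) (int C)"
      by (simp add: anth_eq_def algebra_simps)
    then show ?thesis
      using anth_excess_next[OF assms(2,1,3)] assms(4-6) by (intro exI[of _ 1]) simp
  next
    assume "A * a\<^sup>2 = C * b\<^sup>2"
    then have "anth_eq a b 0 (- int A) 0 (int C)"
      by (simp add: anth_eq_def algebra_simps)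
    then show ?thesis
      using anth_excess_next[OF assms(2,1,3)] assms(4-6) by (intro exI[of _ 1]) simp
  qed
  then obtain n where "anth_excess a b (n + 1)"
    by (metis Suc_eq_plus1 gr0_conv_Suc)
  then show ?thesis
    unfolding anth_excess_def Suc_eq_plus1 add.assoc one_add_one by blast
qed

end
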